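(* Let $D$ be a digraph with vertex set $\{v_1,\ldots,v_n\}$. For $i=1,\ldots,n$ let $d_i^+=|N^+(v_i)|$ and $d_i^-=|N^-(v_i)|$ be the out-degree and in-degree of $v_i$, and let $d_i=|N^+(v_i)\cup N^-(v_i)|$ be the degree of $v_i$ (the number of vertices adjacent to $v_i$). Then $$\alpha(D)\geq \sum_{i=1}^n \left( \frac{1}{1+d_i^+} + \frac{1}{1+d_i^-} - \frac{1}{1+d_i}\right).$$
   Context: All digraphs are finite, loopless and strict (for distinct vertices $u,v$ there is at most one edge from $u$ to $v$; edges in both directions are allowed). $N^+(v)$ and $N^-(v)$ denote the sets of out-neighbours and in-neighbours of $v$. A subset $S\subseteq V(D)$ is acyclic if the induced subdigraph $D[S]$ contains no directed cycle. The independence number $\alpha(D)$ is the maximum size of an acyclic subset of $V(D)$. *)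

theory Defs
  imports Complex_Main
begin

text \<open>Strictness is automatic
  (E is a relation); we require looplessness and that edges lie within V.\<close>

definition digraph :: "'a set \<Rightarrow> ('a \<Rightarrow> 'a \<Rightarrow> bool) \<Rightarrow> bool" where
  "digraph V E \<longleftrightarrow> finite V \<and> (\<forall>u v. E u v \<longrightarrow> u \<in> V \<and> v \<in> V) \<and> (\<forall>v. \<not> E v v)"

definition out_nbrs :: "'a set \<Rightarrow> ('a \<Rightarrow> 'a \<Rightarrow> bool) \<Rightarrow> 'a \<Rightarrow> 'a set" where
  "out_nbrs V E v = {u \<in> V. E v u}"

definition in_nbrs :: "'a set \<Rightarrow> ('a \<Rightarrow> 'a \<Rightarrow> bool) \<Rightarrow> 'a \<Rightarrow> 'a set" where
  "in_nbrs V E v = {u \<in> V. E u v}"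

definition induced_edges :: "('a \<Rightarrow> 'a \<Rightarrow> bool) \<Rightarrow> 'a set \<Rightarrow> ('a \<times> 'a) set" where
  "induced_edges E S = {(u, v). u \<in> S \<and> v \<in> S \<and> E u v}"

definition acyclic_set :: "'a set \<Rightarrow> ('a \<Rightarrow> 'a \<Rightarrow> bool) \<Rightarrow> 'a set \<Rightarrow> bool" where
  "acyclic_set V E S \<longleftrightarrow> S \<subseteq> V \<and> acyclic (induced_edges E S)"

definition dichromatic_alpha :: "'a set \<Rightarrow> ('a \<Rightarrow> 'a \<Rightarrow> bool) \<Rightarrow> nat" where
  "dichromatic_alpha V E = Max (card ` {S. acyclic_set V E S})"

end

theory Submission
  imports Defs "HOL-Combinatorics.Multiset_Permutations" "HOL-Combinatorics.Transposition"
begin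

text \<open>
  Average over all n! orderings of V. For an ordering, let S be the set of vertices that
  precede all their out-neighbours or precede all their in-neighbours. S is acyclic: the
  last vertex of a cycle inside S comes after both its successor and its predecessor on the
  cycle. A vertex v precedes all vertices of a set N not containing v in exactly
  n!/(1 + |N|) orderings, so by inclusion-exclusion v lies in S for
  n! (1/(1 + out-degree) + 1/(1 + in-degree) - 1/(1 + degree)) orderings; hence the average
  size of S is the right-hand side of the bound.
\<close>

lemma trancl_cycle_has_max:
  fixes f :: "'a \<Rightarrow> 'b::linorder"
  assumes "finite r" and cycle: "(x, x) \<in> r\<^sup>+"
  obtains m s p where "(m, s) \<in> r" "(p, m) \<in> r" "f s \<le> f m" "f p \<le> f m"
proof -
  define C where "C = {y. (x, y) \<in> r\<^sup>* \<and> (y, x) \<in> r\<^sup>*}"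
  have "C \<subseteq> insert x (Range r)"
    unfolding C_def by (auto elim: rtranclE)
  then have "finite C"
    using assms(1) by (meson finite_Range finite_insert finite_subset)
  moreover have "x \<in> C" unfolding C_def by simp
  ultimately obtain m where m: "m \<in> C" and max: "\<And>y. y \<in> C \<Longrightarrow> f y \<le> f m"
    using Max_in[of "f ` C"] Max_ge[of "f ` C"]
    by (metis empty_iff finite_imageI image_iff image_is_empty)
  have xm: "(x, m) \<in> r\<^sup>*" and mx: "(m, x) \<in> r\<^sup>*" using m unfolding C_def by auto
  have "(m, m) \<in> r\<^sup>+"
    using mx cycle xm by (meson rtrancl_trancl_trancl trancl_rtrancl_trancl)
  then obtain s p where ms: "(m, s) \<in> r" "(s, m) \<in> r\<^sup>*" and pm: "(m, p) \<in> r\<^sup>*" "(p, m) \<in> r"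
    by (meson tranclD tranclD2)
  have "s \<in> C" "p \<in> C"
    unfolding C_def using xm mx ms pm
    by (auto intro: rtrancl_into_rtrancl converse_rtrancl_into_rtrancl rtrancl_trans)
  with ms(1) pm(2) max show ?thesis by (intro that[of m s p]) auto
qed

definition rank :: "'a list \<Rightarrow> 'a \<Rightarrow> nat" where
  "rank xs v = length (takeWhile (\<lambda>x. x \<noteq> v) xs)"

lemma nth_rank: "v \<in> set xs \<Longrightarrow> xs ! rank xs v = v"
  unfolding rank_def by (induction xs) auto

lemma inj_on_rank: "inj_on (rank xs) (set xs)"
  by (metis inj_onI nth_rank)

lemma rank_map_inj: "inj f \<Longrightarrow> rank (map f xs) (f v) = rank xs v"
  unfolding rank_def by (simp add: takeWhile_map comp_def inj_eq)

definition first_among :: "'a list \<Rightarrow> 'a set \<Rightarrow> 'a \<Rightarrow> bool" where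
  "first_among xs N v \<longleftrightarrow> (\<forall>u\<in>N. u \<noteq> v \<longrightarrow> rank xs v < rank xs u)"

lemma first_among_insert_self: "first_among xs (insert v N) v \<longleftrightarrow> first_among xs N v"
  unfolding first_among_def by auto

lemma first_among_Un: "first_among xs (M \<union> N) v \<longleftrightarrow> first_among xs M v \<and> first_among xs N v"
  unfolding first_among_def by auto

lemma first_among_unique: "\<lbrakk>first_among xs N u; first_among xs N w; u \<in> N; w \<in> N\<rbrakk> \<Longrightarrow> u = w"
  unfolding first_among_def by (metis less_not_sym)

lemma ex_first_among:
  assumes "xs \<in> permutations_of_set V" "N \<subseteq> V" "N \<noteq> {}"
  obtains u where "u \<in> N" "first_among xs N u"
proof -
  obtain u where u: "u \<in> N" and min: "\<And>w. w \<in> N \<Longrightarrow> rank xs u \<le> rank xs w"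
    using assms(3) ex_has_least_nat[of "\<lambda>w. w \<in> N" _ "rank xs"] by blast
  have "set xs = V" using assms(1) by (simp add: permutations_of_setD)
  then have "rank xs u \<noteq> rank xs w" if "w \<in> N" "w \<noteq> u" for w
    using inj_onD[OF inj_on_rank, of xs u w] u that assms(2) by auto
  with min have "first_among xs N u"
    unfolding first_among_def by (simp add: order_neq_le_trans)
  with u show thesis by (rule that)
qed

lemma first_among_map_transpose:
  assumes "N \<subseteq> V" "u \<in> N" "v \<in> N"
    and xs: "xs \<in> permutations_of_set V" "first_among xs N v"
  shows "map (transpose u v) xs \<in> permutations_of_set V"
    and "first_among (map (transpose u v) xs) N u"
proof -
  let ?\<tau> = "transpose u v"
  have "set xs = V" "distinct xs" using xs(1) by (auto dest: permutations_of_setD)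
  moreover have "?\<tau> ` V = V" using assms(1-3) by (intro transpose_image_eq) auto
  ultimately show "map ?\<tau> xs \<in> permutations_of_set V"
    by (intro permutations_of_setI) (auto simp: distinct_map)
  show "first_among (map ?\<tau> xs) N u"
    unfolding first_among_def
  proof (intro ballI impI)
    fix w assume w: "w \<in> N" "w \<noteq> u"
    then have "?\<tau> w \<in> N" "?\<tau> w \<noteq> v"
      using assms(2,3) by (auto simp: transpose_def)
    with xs(2) have "rank xs v < rank xs (?\<tau> w)"
      unfolding first_among_def by blast
    then show "rank (map ?\<tau> xs) u < rank (map ?\<tau> xs) w"
      using rank_map_inj[OF inj_transpose, of u v xs] by (metis transpose_apply_first
          transpose_involutory)
  qed
qed

lemma card_first_among_le:
  assumes "N \<subseteq> V" "u \<in> N" "v \<in> N"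
  shows "card {xs \<in> permutations_of_set V. first_among xs N v}
         \<le> card {xs \<in> permutations_of_set V. first_among xs N u}"
proof (rule card_inj_on_le[where f = "map (transpose u v)"])
  show "inj_on (map (transpose u v)) {xs \<in> permutations_of_set V. first_among xs N v}"
    by (intro inj_on_subset[OF inj_mapI[OF inj_transpose]]) auto
  show "map (transpose u v) ` {xs \<in> permutations_of_set V. first_among xs N v}
        \<subseteq> {xs \<in> permutations_of_set V. first_among xs N u}"
    using first_among_map_transpose[OF assms] by blast
qed simp

lemma card_mult_card_first_among:
  assumes "finite V" "N \<subseteq> V" "v \<in> N"
  shows "card N * card {xs \<in> permutations_of_set V. first_among xs N v} = fact (card V)"
proof -
  let ?P = "permutations_of_set V"
  let ?A = "\<lambda>u. {xs \<in> ?P. first_among xs N u}"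
  have "finite N" using assms(1,2) finite_subset by blast
  have "?P = (\<Union>u\<in>N. ?A u)"
    using ex_first_among[OF _ assms(2)] assms(3) by blast
  then have "card ?P = card (\<Union>u\<in>N. ?A u)" by simp
  also have "\<dots> = (\<Sum>u\<in>N. card (?A u))"
    using \<open>finite N\<close> by (intro card_UN_disjoint) (auto dest: first_among_unique)
  also have "\<dots> = (\<Sum>u\<in>N. card (?A v))"
    using card_first_among_le[OF assms(2) _ assms(3)] card_first_among_le[OF assms(2,3)]
    by (intro sum.cong) (auto intro: antisym)
  finally show ?thesis using assms(1) by simp
qed

lemma card_first_among:
  assumes "finite V" "N \<subseteq> V" "v \<in> V" "v \<notin> N"
  shows "real (card {xs \<in> permutations_of_set V. first_among xs N v})
         = fact (card V) / (1 + real (card N))"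
proof -
  have "finite N" using assms(1,2) finite_subset by blast
  with assms card_mult_card_first_among[of V "insert v N" v]
  have "(1 + card N) * card {xs \<in> permutations_of_set V. first_among xs N v} = fact (card V)"
    by (simp add: first_among_insert_self)
  then have "(1 + real (card N)) * real (card {xs \<in> permutations_of_set V. first_among xs N v})
             = fact (card V)"
    by (metis of_nat_1 of_nat_add of_nat_fact of_nat_mult)
  then show ?thesis by (simp add: field_simps)
qed

definition leading_vertices :: "'a set \<Rightarrow> ('a \<Rightarrow> 'a \<Rightarrow> bool) \<Rightarrow> 'a list \<Rightarrow> 'a set" where
  "leading_vertices V E xs =
     {v \<in> V. first_among xs (out_nbrs V E v) v \<or> first_among xs (in_nbrs V E v) v}"

lemma acyclic_set_leading_vertices:
  assumes D: "digraph V E" and xs: "xs \<in> permutations_of_set V"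
  shows "acyclic_set V E (leading_vertices V E xs)"
proof -
  let ?S = "leading_vertices V E xs"
  let ?r = "induced_edges E ?S"
  have loopless: "\<And>v. \<not> E v v" and in_V: "\<And>u v. E u v \<Longrightarrow> u \<in> V \<and> v \<in> V"
    using D unfolding digraph_def by auto
  have "set xs = V" using xs by (simp add: permutations_of_setD)
  have "finite ?r"
    using D unfolding digraph_def induced_edges_def leading_vertices_def
    by (auto intro: finite_subset[of _ "V \<times> V"])
  have "(x, x) \<notin> ?r\<^sup>+" for x
  proof
    assume "(x, x) \<in> ?r\<^sup>+"
    then obtain m s p where "(m, s) \<in> ?r" "(p, m) \<in> ?r"
        and "rank xs s \<le> rank xs m" "rank xs p \<le> rank xs m"
      using trancl_cycle_has_max[OF \<open>finite ?r\<close>] by metis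
    then have "m \<in> ?S" "E m s" "E p m" "rank xs s \<le> rank xs m" "rank xs p \<le> rank xs m"
      unfolding induced_edges_def by auto
    have "s \<noteq> m" "p \<noteq> m" using \<open>E m s\<close> \<open>E p m\<close> loopless by auto
    then have "rank xs s < rank xs m" "rank xs p < rank xs m"
      using \<open>E m s\<close> \<open>E p m\<close> \<open>rank xs s \<le> rank xs m\<close> \<open>rank xs p \<le> rank xs m\<close>
        in_V inj_on_rank[of xs] \<open>set xs = V\<close>
      by (metis inj_onD order_neq_le_trans)+
    moreover have "s \<in> out_nbrs V E m" "p \<in> in_nbrs V E m"
      using \<open>E m s\<close> \<open>E p m\<close> in_V unfolding out_nbrs_def in_nbrs_def by auto
    ultimately show False
      using \<open>m \<in> ?S\<close> \<open>s \<noteq> m\<close> \<open>p \<noteq> m\<close>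
      unfolding leading_vertices_def first_among_def by force
  qed
  then show ?thesis
    unfolding acyclic_set_def acyclic_def leading_vertices_def by auto
qed

lemma card_le_dichromatic_alpha:
  assumes "finite V" "acyclic_set V E S"
  shows "card S \<le> dichromatic_alpha V E"
proof -
  have "card ` {S. acyclic_set V E S} \<subseteq> card ` Pow V" unfolding acyclic_set_def by auto
  then have "finite (card ` {S. acyclic_set V E S})"
    using assms(1) finite_subset by blast
  with assms(2) show ?thesis unfolding dichromatic_alpha_def by (intro Max_ge) auto
qed

lemma card_leading_vertices_containing:
  assumes D: "digraph V E" and "v \<in> V"
  shows "real (card {xs \<in> permutations_of_set V. v \<in> leading_vertices V E xs})
         = fact (card V) * (1 / (1 + real (card (out_nbrs V E v)))
                            + 1 / (1 + real (card (in_nbrs V E v)))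
                            - 1 / (1 + real (card (out_nbrs V E v \<union> in_nbrs V E v))))"
proof -
  let ?P = "permutations_of_set V"
  let ?A = "{xs \<in> ?P. first_among xs (out_nbrs V E v) v}"
  let ?B = "{xs \<in> ?P. first_among xs (in_nbrs V E v) v}"
  have "finite V" "v \<notin> out_nbrs V E v" "v \<notin> in_nbrs V E v"
    using D unfolding digraph_def out_nbrs_def in_nbrs_def by auto
  have nbrs_V: "out_nbrs V E v \<subseteq> V" "in_nbrs V E v \<subseteq> V"
    unfolding out_nbrs_def in_nbrs_def by auto
  let ?F = "fact (card V) :: real"
  have "{xs \<in> ?P. v \<in> leading_vertices V E xs} = ?A \<union> ?B"
    using \<open>v \<in> V\<close> unfolding leading_vertices_def by auto
  then have "real (card {xs \<in> ?P. v \<in> leading_vertices V E xs})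
      = real (card ?A) + real (card ?B) - real (card (?A \<inter> ?B))"
    using card_Un_Int[of ?A ?B] by simp
  moreover have "?A \<inter> ?B = {xs \<in> ?P. first_among xs (out_nbrs V E v \<union> in_nbrs V E v) v}"
    by (auto simp: first_among_Un)
  moreover have "real (card ?A) = ?F / (1 + real (card (out_nbrs V E v)))"
    using nbrs_V \<open>v \<notin> out_nbrs V E v\<close> by (intro card_first_among \<open>finite V\<close> \<open>v \<in> V\<close>)
  moreover have "real (card ?B) = ?F / (1 + real (card (in_nbrs V E v)))"
    using nbrs_V \<open>v \<notin> in_nbrs V E v\<close> by (intro card_first_among \<open>finite V\<close> \<open>v \<in> V\<close>)
  moreover have "real (card {xs \<in> ?P. first_among xs (out_nbrs V E v \<union> in_nbrs V E v) v})
      = ?F / (1 + real (card (out_nbrs V E v \<union> in_nbrs V E v)))"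
    using nbrs_V \<open>v \<notin> out_nbrs V E v\<close> \<open>v \<notin> in_nbrs V E v\<close>
    by (intro card_first_among \<open>finite V\<close> \<open>v \<in> V\<close>) auto
  ultimately show ?thesis
    by (simp only: right_diff_distrib distrib_left times_divide_eq_right mult_1_right)
qed

lemma sum_card_leading_vertices:
  assumes D: "digraph V E"
  shows "real (\<Sum>xs\<in>permutations_of_set V. card (leading_vertices V E xs))
         = fact (card V) * (\<Sum>v\<in>V. 1 / (1 + real (card (out_nbrs V E v)))
                                   + 1 / (1 + real (card (in_nbrs V E v)))
                                   - 1 / (1 + real (card (out_nbrs V E v \<union> in_nbrs V E v))))"
proof -
  let ?P = "permutations_of_set V"
  have "finite V" using D unfolding digraph_def by simp
  have "(\<Sum>xs\<in>?P. card (leading_vertices V E xs))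
        = (\<Sum>xs\<in>?P. card {v \<in> V. v \<in> leading_vertices V E xs})"
    unfolding leading_vertices_def by simp
  also have "\<dots> = (\<Sum>v\<in>V. card {xs \<in> ?P. v \<in> leading_vertices V E xs})"
    using \<open>finite V\<close> by (intro sum_multicount_gen) auto
  finally show ?thesis
    using card_leading_vertices_containing[OF D] by (simp add: sum_distrib_left)
qed

theorem mainTheorem1:
  fixes V :: "'a set" and E :: "'a \<Rightarrow> 'a \<Rightarrow> bool"
  assumes "digraph V E"
  shows "(\<Sum>v\<in>V. 1 / (1 + real (card (out_nbrs V E v)))
                 + 1 / (1 + real (card (in_nbrs V E v)))
                 - 1 / (1 + real (card (out_nbrs V E v \<union> in_nbrs V E v))))
         \<le> real (dichromatic_alpha V E)"
proof -
  let ?P = "permutations_of_set V"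
  have "finite V" using assms unfolding digraph_def by simp
  have "fact (card V) * (\<Sum>v\<in>V. 1 / (1 + real (card (out_nbrs V E v)))
                                + 1 / (1 + real (card (in_nbrs V E v)))
                                - 1 / (1 + real (card (out_nbrs V E v \<union> in_nbrs V E v))))
        = real (\<Sum>xs\<in>?P. card (leading_vertices V E xs))"
    using sum_card_leading_vertices[OF assms] by simp
  also have "\<dots> \<le> real (\<Sum>xs\<in>?P. dichromatic_alpha V E)"
    using acyclic_set_leading_vertices[OF assms] card_le_dichromatic_alpha[OF \<open>finite V\<close>]
    by (intro of_nat_mono sum_mono) auto
  also have "\<dots> = fact (card V) * real (dichromatic_alpha V E)"
    using \<open>finite V\<close> by simp
  finally show ?thesis by simp
qed

end
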